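(* Let $N\subset M\subset G$ be subgroups, both normal in $G$, with $N$ contained in the center of $M$, and let $\sigma$ be a proper closed ribbon. For $n\in N$ and $t\in G/M$ put $J_\sigma^{n,t}:=\sum_{x\in t}F_\sigma^{n,x}$ (here $t$ is regarded as a subset of $G$). Then $J_\sigma^{n,t}=\sum_{C}K_\sigma^{\{n\},C}$, where the sum runs over those $C\in\mathrm{Conj}(G/N,M/N)$ whose elements (as cosets of $N$) are contained in $t$, and $K_\sigma^{\{n\},C}$ is the operator $K_\sigma^{DC}$ with $D=\{n\}$ (a conjugacy class of $N'_C$ since $n$ is central in $M$).
   Context: Setting. $G$ is a finite group; $\bar g$ denotes $g^{-1}$. A lattice is embedded in an orientable surface, with vertex set $V$, edge set $E$, face set $F$; every edge is oriented, no edge has equal endpoints, and a face with $s$ edges has $s$ distinct vertices (same conditions for the dual lattice). Dual edges $e^*$ are oriented so that $e^*$ crosses $e$ from right to left. For each edge $e$ there is an inverse edge $\bar e$ with reversed orientation ($\bar{\bar e}=e$); $\bar E$ is the set of inverse edges. Each edge $e\in E$ carries a qudit $\mathbb C[G]$ with orthonormal basis $\{|g\rangle\}_{g\in G}$; $\mathcal H_G=\bigotimes_{e\in E}\mathbb C[G]$. Single-qudit operators: $L^h=\sum_g|hg\rangle\langle g|$, $T^g=|g\rangle\langle g|$, $I=\sum_g|\bar g\rangle\langle g|$. Sites and triangles. A site is a pair $s=(v,f)$ with $f$ a face and $v$ a vertex of $f$; write $s=(v_s,f_s)$. A direct triangle $\tau=(s_0,s_1,e)$ consists of sites $s_0,s_1$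 with $f_{s_0}=f_{s_1}$ and $e\in E\cup\bar E$ going from $v_{s_0}$ to $v_{s_1}$, such that $s_0,s_1,e$ form a triangle with sides in counterclockwise order. A dual triangle $\tau=(s_0,s_1,e^* )$ consists of sites with $v_{s_0}=v_{s_1}$ and a dual edge $e^*$ ($e\in E\cup\bar E$) going from the dual vertex $f_{s_0}^*$ to $f_{s_1}^*$, with sides in clockwise order. Write $\partial_i\tau=s_i$, $e_\tau=e$. The complementary triangle $\bar\tau$ is the triangle of the same type with edge $\bar e_\tau$. Triangle operators: for a dual triangle $L_\tau^h:=I^xL^hI^x$, for a direct triangle $T_\tau^g:=I^xT^gI^x$, acting on the qudit of the underlying edge of $e_\tau$, with $x=0$ if $e_\tau\in E$ and $x=1$ if $e_\tau\in\bar E$. Ribbons. A strip is either trivial (a single site) or a sequence of triangles $\rho=(\tau_1,\dots,\tau_n)$ with $\partial_1\tau_i=\partial_0\tau_{i+1}$; its ends are $\partial_0\rho=\partial_0\tau_1$, $\partial_1\rho=\partial_1\tau_n$; composition $\rho_1\rho_2$ is concatenation when $\partial_1\rho_1=\partial_0\rho_2$. If $\tau'_1,\dots,\tau'_q$ are its direct triangles in order, its direct path has vertices $v_0=v_{\partial_0\tau'_1},v_1=v_{\partial_1\tau'_1},\dots,v_q=v_{\partial_1\tau'_q}$; its dual path has the faces $f_0,\dots,f_r$ defined analogously from its dual triangles. A ribbon is a strip such that no triangle occurs together with its complement, the $v_i$ are pairwise distinct except possibly $v_0=v_q$, and the $f_i$ are pairwise distinct except possibly $f_0=f_r$. A ribbon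 is direct (dual) if it consists only of direct (dual) triangles, proper if it is neither, open if $v_{\partial_0\rho}\ne v_{\partial_1\rho}$ and $f_{\partial_0\rho}\ne f_{\partial_1\rho}$, closed if $\partial_0\rho=\partial_1\rho$. Ribbon operators. For a trivial ribbon $F^{h,g}=\delta_{1,g}$; for a dual triangle $F_\tau^{h,g}=\delta_{1,g}L_\tau^h$; for a direct triangle $F_\tau^{h,g}=T_\tau^g$; for a ribbon $\rho=\rho_1\rho_2$, $F_\rho^{h,g}=\sum_{k\in G}F_{\rho_1}^{h,k}F_{\rho_2}^{\bar khk,\bar kg}$ (independent of the decomposition). Closed-ribbon operators. $\mathrm{Conj}(G/N,M/N)$ is the set of orbits of $G/N$ under conjugation by $M/N$. For each such orbit $C$ fix $r_C\in G$ with $r_CN\in C$, let $N'_C:=\{m\in M: m r_C\bar m\bar r_C\in N\}$ and let $Q_C\subset M$ be a set of representatives of $M/N'_C$. For $D$ a conjugacy class of $N'_C$, $K_\sigma^{DC}:=\sum_{q\in Q_C}\sum_{d\in D}\sum_{n\in N}F_\sigma^{\,qd\bar q,\;qr_C\bar q n}$. *)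

theory Defs
  imports Complex_Main "HOL-Library.Function_Algebras"
begin

text \<open>An oriented edge (element of E or its inverse) is a pair (e, b):
  b = False means e itself, b = True means the inverse edge.\<close>

record ('v, 'e, 'f) lattice =
  ltail  :: "'e \<Rightarrow> 'v"
  lhead  :: "'e \<Rightarrow> 'v"
  lleft  :: "'e \<Rightarrow> 'f"
  lright :: "'e \<Rightarrow> 'f"

definition lattice_ok :: "('v, 'e, 'f) lattice \<Rightarrow> bool" where
  "lattice_ok L \<longleftrightarrow> (\<forall>e. ltail L e \<noteq> lhead L e \<and> lleft L e \<noteq> lright L e)"

type_synonym 'e dart = "'e \<times> bool"

definition rev_dart :: "'e dart \<Rightarrow> 'e dart" where
  "rev_dart d = (fst d, \<not> snd d)"

definition dtail :: "('v, 'e, 'f) lattice \<Rightarrow> 'e dart \<Rightarrow> 'v" where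
  "dtail L d = (if snd d then lhead L (fst d) else ltail L (fst d))"
definition dhead :: "('v, 'e, 'f) lattice \<Rightarrow> 'e dart \<Rightarrow> 'v" where
  "dhead L d = (if snd d then ltail L (fst d) else lhead L (fst d))"
definition dleft :: "('v, 'e, 'f) lattice \<Rightarrow> 'e dart \<Rightarrow> 'f" where
  "dleft L d = (if snd d then lright L (fst d) else lleft L (fst d))"
definition dright :: "('v, 'e, 'f) lattice \<Rightarrow> 'e dart \<Rightarrow> 'f" where
  "dright L d = (if snd d then lleft L (fst d) else lright L (fst d))"

text \<open>Sites: (v, f) with v a vertex of f.\<close>
definition is_site :: "('v, 'e, 'f) lattice \<Rightarrow> 'v \<times> 'f \<Rightarrow> bool" where
  "is_site L s \<longleftrightarrow> (\<exists>d. dtail L d = fst s \<and> (dleft L d = snd s \<or> dright L d = snd s))"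

datatype ('v, 'f, 'e) tri =
    DirT "'v \<times> 'f" "'v \<times> 'f" "'e dart"
  | DualT "'v \<times> 'f" "'v \<times> 'f" "'e dart"

fun bd0 :: "('v, 'f, 'e) tri \<Rightarrow> 'v \<times> 'f" where
  "bd0 (DirT s0 s1 d) = s0" | "bd0 (DualT s0 s1 d) = s0"
fun bd1 :: "('v, 'f, 'e) tri \<Rightarrow> 'v \<times> 'f" where
  "bd1 (DirT s0 s1 d) = s1" | "bd1 (DualT s0 s1 d) = s1"
fun tdart :: "('v, 'f, 'e) tri \<Rightarrow> 'e dart" where
  "tdart (DirT s0 s1 d) = d" | "tdart (DualT s0 s1 d) = d"
fun is_direct :: "('v, 'f, 'e) tri \<Rightarrow> bool" where
  "is_direct (DirT s0 s1 d) = True" | "is_direct (DualT s0 s1 d) = False"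

text \<open>Direct triangle (s0,s1,e): same face f, e goes from v_{s0} to v_{s1};
  the sides s0, s1, e in counterclockwise order means f lies to the right of e.
  Dual triangle (s0,s1,e*): same vertex v, e* goes from f_{s0} to f_{s1}
  (so f_{s0} is right of e, f_{s1} left of e, as e* crosses e from right to
  left); sides in clockwise order means v lies to the left of e*, i.e. v is
  the tail of e.\<close>
fun valid_tri :: "('v, 'e, 'f) lattice \<Rightarrow> ('v, 'f, 'e) tri \<Rightarrow> bool" where
  "valid_tri L (DirT s0 s1 d) \<longleftrightarrow>
     is_site L s0 \<and> is_site L s1 \<and> snd s0 = snd s1 \<and>
     dtail L d = fst s0 \<and> dhead L d = fst s1 \<and> dright L d = snd s0"
| "valid_tri L (DualT s0 s1 d) \<longleftrightarrow>
     is_site L s0 \<and> is_site L s1 \<and> fst s0 = fst s1 \<and>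
     dright L d = snd s0 \<and> dleft L d = snd s1 \<and> dtail L d = fst s0"

definition complementary :: "('v, 'f, 'e) tri \<Rightarrow> ('v, 'f, 'e) tri \<Rightarrow> bool" where
  "complementary \<tau> \<tau>' \<longleftrightarrow> is_direct \<tau> = is_direct \<tau>' \<and> tdart \<tau>' = rev_dart (tdart \<tau>)"

definition is_strip :: "('v, 'e, 'f) lattice \<Rightarrow> ('v, 'f, 'e) tri list \<Rightarrow> bool" where
  "is_strip L \<rho> \<longleftrightarrow> \<rho> \<noteq> [] \<and> (\<forall>\<tau>\<in>set \<rho>. valid_tri L \<tau>) \<and>
     (\<forall>i. Suc i < length \<rho> \<longrightarrow> bd1 (\<rho> ! i) = bd0 (\<rho> ! Suc i))"

definition direct_path :: "('v, 'f, 'e) tri list \<Rightarrow> 'v list" where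
  "direct_path \<rho> = (let ds = filter is_direct \<rho> in
     if ds = [] then [] else fst (bd0 (hd ds)) # map (\<lambda>\<tau>. fst (bd1 \<tau>)) ds)"

definition dual_path :: "('v, 'f, 'e) tri list \<Rightarrow> 'f list" where
  "dual_path \<rho> = (let ds = filter (\<lambda>\<tau>. \<not> is_direct \<tau>) \<rho> in
     if ds = [] then [] else snd (bd0 (hd ds)) # map (\<lambda>\<tau>. snd (bd1 \<tau>)) ds)"

definition path_ok :: "'a list \<Rightarrow> bool" where
  "path_ok xs \<longleftrightarrow> distinct (tl xs) \<and> distinct (butlast xs)"

definition is_ribbon :: "('v, 'e, 'f) lattice \<Rightarrow> ('v, 'f, 'e) tri list \<Rightarrow> bool" where
  "is_ribbon L \<rho> \<longleftrightarrow> is_strip L \<rho> \<and>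
     (\<forall>\<tau>\<in>set \<rho>. \<forall>\<tau>'\<in>set \<rho>. \<not> complementary \<tau> \<tau>') \<and>
     path_ok (direct_path \<rho>) \<and> path_ok (dual_path \<rho>)"

definition proper_ribbon :: "('v, 'f, 'e) tri list \<Rightarrow> bool" where
  "proper_ribbon \<rho> \<longleftrightarrow> (\<exists>\<tau>\<in>set \<rho>. is_direct \<tau>) \<and> (\<exists>\<tau>\<in>set \<rho>. \<not> is_direct \<tau>)"

definition closed_ribbon :: "('v, 'f, 'e) tri list \<Rightarrow> bool" where
  "closed_ribbon \<rho> \<longleftrightarrow> \<rho> \<noteq> [] \<and> bd0 (hd \<rho>) = bd1 (last \<rho>)"

text \<open>An operator is given by its matrix in the product basis |c>, c : E \<Rightarrow> G:
  A c' c = <c'|A|c>. The group G is written additively (group_add need not be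
  commutative): g + h is the product gh, -g the inverse, 0 the unit.\<close>

type_synonym ('e, 'g) op = "('e \<Rightarrow> 'g) \<Rightarrow> ('e \<Rightarrow> 'g) \<Rightarrow> complex"

definition opmult :: "('e::finite, 'g::finite) op \<Rightarrow> ('e, 'g) op \<Rightarrow> ('e, 'g) op" where
  "opmult A B = (\<lambda>c' c. \<Sum>c''\<in>UNIV. A c' c'' * B c'' c)"

definition opid :: "('e, 'g) op" where
  "opid = (\<lambda>c' c. if c' = c then 1 else 0)"

definition qL :: "'g::group_add \<Rightarrow> 'g \<Rightarrow> 'g \<Rightarrow> complex" where
  "qL h = (\<lambda>a b. if a = h + b then 1 else 0)"
definition qT :: "'g \<Rightarrow> 'g \<Rightarrow> 'g \<Rightarrow> complex" where
  "qT g = (\<lambda>a b. if a = g \<and> b = g then 1 else 0)"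
definition qI :: "'g::group_add \<Rightarrow> 'g \<Rightarrow> complex" where
  "qI = (\<lambda>a b. if a = - b then 1 else 0)"
definition qmult :: "('g::finite \<Rightarrow> 'g \<Rightarrow> complex) \<Rightarrow> ('g \<Rightarrow> 'g \<Rightarrow> complex) \<Rightarrow> 'g \<Rightarrow> 'g \<Rightarrow> complex" where
  "qmult u w = (\<lambda>a b. \<Sum>x\<in>UNIV. u a x * w x b)"

definition conjI :: "bool \<Rightarrow> ('g::{group_add,finite} \<Rightarrow> 'g \<Rightarrow> complex) \<Rightarrow> 'g \<Rightarrow> 'g \<Rightarrow> complex" where
  "conjI b u = (if b then qmult qI (qmult u qI) else u)"

definition on_edge :: "'e \<Rightarrow> ('g \<Rightarrow> 'g \<Rightarrow> complex) \<Rightarrow> ('e, 'g) op" where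
  "on_edge e u = (\<lambda>c' c. if (\<forall>x. x \<noteq> e \<longrightarrow> c' x = c x) then u (c' e) (c e) else 0)"

fun tri_F :: "('v, 'f, 'e) tri \<Rightarrow> 'g::{group_add,finite} \<Rightarrow> 'g \<Rightarrow> ('e, 'g) op" where
  "tri_F (DualT s0 s1 d) h g = (if g = 0 then on_edge (fst d) (conjI (snd d) (qL h)) else 0)"
| "tri_F (DirT s0 s1 d) h g = on_edge (fst d) (conjI (snd d) (qT g))"

text \<open>Ribbon operators: F_{tau rho}^{h,g} = sum_k F_tau^{h,k} F_rho^{k^-1 h k, k^-1 g};
  the empty list plays the role of the trivial ribbon.\<close>
fun ribbon_F :: "('v, 'f, 'e::finite) tri list \<Rightarrow> 'g::{group_add,finite} \<Rightarrow> 'g \<Rightarrow> ('e, 'g) op" where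
  "ribbon_F [] h g = (if g = 0 then opid else 0)"
| "ribbon_F (\<tau> # \<rho>) h g =
     (\<Sum>k\<in>UNIV. opmult (tri_F \<tau> h k) (ribbon_F \<rho> (- k + h + k) (- k + g)))"

definition subgrp :: "'g::group_add set \<Rightarrow> bool" where
  "subgrp H \<longleftrightarrow> 0 \<in> H \<and> (\<forall>a\<in>H. \<forall>b\<in>H. a + b \<in> H) \<and> (\<forall>a\<in>H. - a \<in> H)"

definition normal_subgrp :: "'g::group_add set \<Rightarrow> bool" where
  "normal_subgrp H \<longleftrightarrow> subgrp H \<and> (\<forall>g. \<forall>h\<in>H. g + h + - g \<in> H)"

definition lcoset :: "'g::group_add \<Rightarrow> 'g set \<Rightarrow> 'g set" where
  "lcoset x H = (\<lambda>h. x + h) ` H"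

definition quot :: "'g::group_add set \<Rightarrow> 'g set set" where
  "quot H = {lcoset x H | x. True}"

text \<open>Conj(G/N, M/N): orbits of G/N under conjugation by M/N; (mN)(xN)(mN)^-1 = (m x m^-1)N\<close>
definition conj_orbits :: "'g::group_add set \<Rightarrow> 'g set \<Rightarrow> 'g set set set" where
  "conj_orbits N M = {{lcoset (m + x + - m) N | m. m \<in> M} | x. True}"

definition Nprime :: "'g::group_add set \<Rightarrow> 'g set \<Rightarrow> 'g \<Rightarrow> 'g set" where
  "Nprime N M rC = {m \<in> M. m + rC + - m + - rC \<in> N}"

definition reps :: "'g::group_add set \<Rightarrow> 'g set \<Rightarrow> 'g set \<Rightarrow> bool" where
  "reps Q M H \<longleftrightarrow> Q \<subseteq> M \<and> (\<forall>m\<in>M. \<exists>!q. q \<in> Q \<and> lcoset q H = lcoset m H)"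

text \<open>K_sigma^{DC}, depending on the choices r (of r_C) and Q (of Q_C)\<close>
definition Kop :: "('v, 'f, 'e::finite) tri list \<Rightarrow> 'g::{group_add,finite} set \<Rightarrow>
    ('g set set \<Rightarrow> 'g) \<Rightarrow> ('g set set \<Rightarrow> 'g set) \<Rightarrow> 'g set \<Rightarrow> 'g set set \<Rightarrow> ('e, 'g) op" where
  "Kop \<sigma> N r Q D C =
     (\<Sum>q\<in>Q C. \<Sum>d\<in>D. \<Sum>n\<in>N. ribbon_F \<sigma> (q + d + - q) (q + r C + - q + n))"

definition Jop :: "('v, 'f, 'e::finite) tri list \<Rightarrow> 'g::{group_add,finite} \<Rightarrow> 'g set \<Rightarrow> ('e, 'g) op" where
  "Jop \<sigma> n t = (\<Sum>x\<in>t. ribbon_F \<sigma> n x)"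

end

theory Submission
  imports Defs
begin

(* Write orb N M x for the M-conjugation orbit of the coset xN in G/N.
   1. The unions of the orbits in Conj(G/N, M/N) partition G; an orbit is determined by any
      element of its union (orb_eq_of_mem), and lies inside a single coset of M when N <= M
      (Union_orb_subset_coset).  Hence the coset t is the disjoint union of the orbits
      contained in it (coset_eq_Union_conj_orbits, conj_orbits_disjoint).
   2. Orbit-stabiliser: m1 r m1^-1 N = m2 r m2^-1 N iff m1 N'_C = m2 N'_C
      (conj_coset_eq_iff), so (q, k) |-> q r_C q^-1 k is a bijection from Q_C x N onto the
      union of C (conj_orbit_param).
   3. As n is central in M, q n q^-1 = n and K^{{n},C} is the sum of F^{n,y} over the
      union of C (Kop_eq_sum_over_orbit).  Summing over the orbits inside t gives J. *)

(* Group elements are written g + h and inverses - g throughout; keeping - g as a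
   separate summand (instead of folding it into a difference) lets the associativity
   and inverse laws normalise group words. *)
declare add_uminus_conv_diff [simp del]

lemma sg_add: "subgrp H \<Longrightarrow> a \<in> H \<Longrightarrow> b \<in> H \<Longrightarrow> a + b \<in> (H::'g::group_add set)"
  and sg_neg: "subgrp H \<Longrightarrow> a \<in> H \<Longrightarrow> - a \<in> H"
  and sg_zero: "subgrp H \<Longrightarrow> 0 \<in> H"
  by (simp_all add: subgrp_def)

lemma normal_subgrp_subgrp: "normal_subgrp N \<Longrightarrow> subgrp (N::'g::group_add set)"
  by (simp add: normal_subgrp_def)

lemma normal_conj_iff:
  assumes "normal_subgrp N"
  shows "g + h + - g \<in> N \<longleftrightarrow> (h::'g::group_add) \<in> N"
proof
  assume "g + h + - g \<in> N"
  then have "- g + (g + h + - g) + - (- g) \<in> N"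
    using assms unfolding normal_subgrp_def by blast
  then show "h \<in> N" by (simp add: add.assoc)
qed (use assms in \<open>simp add: normal_subgrp_def\<close>)

lemma normal_conj_iff':
  "normal_subgrp N \<Longrightarrow> - g + h + g \<in> N \<longleftrightarrow> (h::'g::group_add) \<in> N"
  using normal_conj_iff[of N "- g" h] by simp

lemma mem_lcoset: "(x::'g::group_add) \<in> lcoset a H \<longleftrightarrow> - a + x \<in> H"
  by (force simp: lcoset_def add.assoc[symmetric])

lemma lcoset_self: "subgrp H \<Longrightarrow> (a::'g::group_add) \<in> lcoset a H"
  by (simp add: mem_lcoset sg_zero)

lemma lcoset_eq_iff:
  assumes "subgrp H"
  shows "lcoset (a::'g::group_add) H = lcoset b H \<longleftrightarrow> - a + b \<in> H"
proof
  assume "lcoset a H = lcoset b H"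
  moreover have "b \<in> lcoset b H" using assms by (rule lcoset_self)
  ultimately show "- a + b \<in> H" by (metis mem_lcoset)
next
  assume ab: "- a + b \<in> H"
  have "- a + x \<in> H \<longleftrightarrow> - b + x \<in> H" for x
  proof
    assume "- a + x \<in> H"
    with ab assms have "- (- a + b) + (- a + x) \<in> H" by (simp add: sg_add sg_neg del: minus_add_distrib)
    then show "- b + x \<in> H" by (simp add: minus_add add.assoc)
  next
    assume "- b + x \<in> H"
    with ab assms have "(- a + b) + (- b + x) \<in> H" by (simp add: sg_add)
    then show "- a + x \<in> H" by (simp add: add.assoc)
  qed
  then show "lcoset a H = lcoset b H" by (auto simp: mem_lcoset)
qed

lemma lcoset_absorb: "subgrp H \<Longrightarrow> k \<in> H \<Longrightarrow> lcoset ((a::'g::group_add) + k) H = lcoset a H"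
  by (simp add: lcoset_eq_iff minus_add add.assoc sg_neg)

definition orb :: "'g::group_add set \<Rightarrow> 'g set \<Rightarrow> 'g \<Rightarrow> 'g set set" where
  "orb N M x = {lcoset (m + x + - m) N | m. m \<in> M}"

lemma conj_orbits_orb: "conj_orbits N M = range (orb N M)"
  by (auto simp: conj_orbits_def orb_def)

lemma mem_Union_orb:
  "y \<in> \<Union>(orb N M x) \<longleftrightarrow> (\<exists>m\<in>M. \<exists>k\<in>N. y = m + x + - m + (k::'g::group_add))"
  by (auto simp: orb_def lcoset_def)

lemma orb_subset_of_mem:
  assumes N: "normal_subgrp N" and M: "subgrp M" and y: "y \<in> \<Union>(orb N M x)"
  shows "orb N M y \<subseteq> orb N M (x::'g::group_add)"
proof -
  obtain m0 k where m0: "m0 \<in> M" and k: "k \<in> N" and y_eq: "y = m0 + x + - m0 + k"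
    using y unfolding mem_Union_orb by blast
  show ?thesis
  proof
    fix X assume "X \<in> orb N M y"
    then obtain m where m: "m \<in> M" and X: "X = lcoset (m + y + - m) N" by (auto simp: orb_def)
    have "m + y + - m = (m + m0) + x + - (m + m0) + (m + k + - m)"
      by (simp add: y_eq add.assoc minus_add)
    moreover have "m + k + - m \<in> N" using N k by (simp add: normal_conj_iff)
    ultimately have "X = lcoset ((m + m0) + x + - (m + m0)) N"
      using N X by (simp add: lcoset_absorb normal_subgrp_subgrp)
    moreover have "m + m0 \<in> M" using M m m0 by (simp add: sg_add)
    ultimately show "X \<in> orb N M x" by (auto simp: orb_def)
  qed
qed

lemma mem_Union_orb_sym:
  assumes N: "normal_subgrp N" and M: "subgrp M" and y: "y \<in> \<Union>(orb N M x)"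
  shows "x \<in> \<Union>(orb N M (y::'g::group_add))"
proof -
  obtain m0 k where m0: "m0 \<in> M" and k: "k \<in> N" and y_eq: "y = m0 + x + - m0 + k"
    using y unfolding mem_Union_orb by blast
  have "x = - m0 + y + - (- m0) + - (- m0 + k + m0)"
    by (simp add: y_eq add.assoc minus_add)
  moreover have "- (- m0 + k + m0) \<in> N"
    using N k by (simp add: normal_conj_iff' normal_subgrp_subgrp sg_neg)
  moreover have "- m0 \<in> M" using M m0 by (simp add: sg_neg)
  ultimately show ?thesis unfolding mem_Union_orb by (metis minus_minus)
qed

lemma orb_eq_of_mem:
  assumes "normal_subgrp N" and "subgrp M" and "y \<in> \<Union>(orb N M x)"
  shows "orb N M y = orb N M (x::'g::group_add)"
  using assms by (metis orb_subset_of_mem mem_Union_orb_sym subset_antisym)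

lemma conj_orbit_eq_orb:
  assumes "normal_subgrp N" and "subgrp M" and "C \<in> conj_orbits N M" and "y \<in> \<Union>C"
  shows "C = orb N M (y::'g::group_add)"
proof -
  obtain x where C: "C = orb N M x" using assms(3) by (auto simp: conj_orbits_orb)
  have "y \<in> \<Union>(orb N M x)" using assms(4) by (simp only: C)
  then show ?thesis unfolding C by (rule orb_eq_of_mem[OF assms(1,2), symmetric])
qed

lemma conj_orbits_disjoint:
  assumes "normal_subgrp N" and "subgrp M"
    and "C1 \<in> conj_orbits N M" and "C2 \<in> conj_orbits N M" and "C1 \<noteq> C2"
  shows "\<Union>C1 \<inter> \<Union>C2 = ({} :: 'g::group_add set)"
proof (rule ccontr)
  assume "\<Union>C1 \<inter> \<Union>C2 \<noteq> {}"
  then obtain y where "y \<in> \<Union>C1" and "y \<in> \<Union>C2" by blast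
  then have "C1 = orb N M y" and "C2 = orb N M y"
    using conj_orbit_eq_orb[OF assms(1,2)] assms(3,4) by blast+
  with assms(5) show False by simp
qed

(* For N <= M normal, the whole orbit of yN stays inside the coset yM:
   y^-1 (m y m^-1 k) = (y^-1 m y) m^-1 k lies in M. *)
lemma Union_orb_subset_coset:
  assumes M: "normal_subgrp M" and NM: "N \<subseteq> M"
  shows "\<Union>(orb N M y) \<subseteq> lcoset (y::'g::group_add) M"
proof
  fix z assume "z \<in> \<Union>(orb N M y)"
  then obtain m k where m: "m \<in> M" and k: "k \<in> N" and z: "z = m + y + - m + k"
    unfolding mem_Union_orb by blast
  have sM: "subgrp M" using M by (rule normal_subgrp_subgrp)
  have "- y + m + y \<in> M" using M m by (simp add: normal_conj_iff')
  then have "(- y + m + y) + - m + k \<in> M" using sM m k NM by (blast intro: sg_add sg_neg)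
  moreover have "(- y + m + y) + - m + k = - y + z" by (simp add: z add.assoc)
  ultimately show "z \<in> lcoset y M" by (simp add: mem_lcoset)
qed

lemma coset_eq_Union_conj_orbits:
  assumes N: "normal_subgrp N" and M: "normal_subgrp M" and NM: "N \<subseteq> M" and t: "t \<in> quot M"
  shows "\<Union>(Union ` {C \<in> conj_orbits N M. \<forall>X\<in>C. X \<subseteq> t}) = (t::'g::group_add set)"
proof
  show "t \<subseteq> \<Union>(Union ` {C \<in> conj_orbits N M. \<forall>X\<in>C. X \<subseteq> t})"
  proof
    fix y assume y: "y \<in> t"
    have sN: "subgrp N" and sM: "subgrp M" using N M by (simp_all add: normal_subgrp_subgrp)
    obtain x0 where t_eq: "t = lcoset x0 M" using t by (auto simp: quot_def)
    then have "t = lcoset y M" using y sM by (simp add: lcoset_eq_iff mem_lcoset)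
    then have "\<forall>X\<in>orb N M y. X \<subseteq> t" using Union_orb_subset_coset[OF M NM] by blast
    moreover have "y = 0 + y + - 0 + 0" by simp
    then have "y \<in> \<Union>(orb N M y)" unfolding mem_Union_orb using sN sM sg_zero by blast
    ultimately show "y \<in> \<Union>(Union ` {C \<in> conj_orbits N M. \<forall>X\<in>C. X \<subseteq> t})"
      by (auto simp: conj_orbits_orb)
  qed
qed auto

(* N'_C, the stabiliser of the coset r N under M-conjugation, is a subgroup:
   the commutator condition is closed under products and inverses by normality of N. *)
lemma Nprime_subgrp:
  assumes N: "normal_subgrp N" and M: "subgrp M"
  shows "subgrp (Nprime N M (r::'g::group_add))"
  unfolding subgrp_def
proof (intro conjI ballI)
  have sN: "subgrp N" using N by (rule normal_subgrp_subgrp)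
  show "0 \<in> Nprime N M r" using sN M by (simp add: Nprime_def sg_zero)
  fix m1 m2 assume m1: "m1 \<in> Nprime N M r" and m2: "m2 \<in> Nprime N M r"
  then have "m1 + (m2 + r + - m2 + - r) + - m1 + (m1 + r + - m1 + - r) \<in> N"
    using N sN by (simp add: Nprime_def normal_conj_iff sg_add)
  moreover have "m1 + (m2 + r + - m2 + - r) + - m1 + (m1 + r + - m1 + - r)
      = (m1 + m2) + r + - (m1 + m2) + - r"
    by (simp add: add.assoc minus_add)
  ultimately show "m1 + m2 \<in> Nprime N M r" using m1 m2 M by (simp add: Nprime_def sg_add)
next
  have sN: "subgrp N" using N by (rule normal_subgrp_subgrp)
  fix m assume m: "m \<in> Nprime N M r"
  then have "- m + (- (m + r + - m + - r)) + - (- m) \<in> N"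
    using N sN by (simp add: Nprime_def normal_conj_iff' sg_neg del: minus_add_distrib)
  moreover have "- m + (- (m + r + - m + - r)) + - (- m) = - m + r + - (- m) + - r"
    by (simp add: add.assoc minus_add)
  ultimately show "- m \<in> Nprime N M r" using m M by (simp add: Nprime_def sg_neg)
qed

(* Orbit-stabiliser: two conjugates of r N agree iff the conjugating elements of M lie in
   the same coset of N'; with w = m1^-1 m2, the quotient of the conjugates is a conjugate
   of the commutator w r w^-1 r^-1. *)
lemma conj_coset_eq_iff:
  assumes N: "normal_subgrp N" and M: "subgrp M" and m1: "m1 \<in> M" and m2: "m2 \<in> M"
  shows "lcoset (m1 + r + - m1) N = lcoset (m2 + r + - m2) N
     \<longleftrightarrow> lcoset m1 (Nprime N M r) = lcoset (m2::'g::group_add) (Nprime N M r)"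
proof -
  define w where "w = - m1 + m2"
  have wM: "w \<in> M" using M m1 m2 by (simp add: w_def sg_add sg_neg)
  have "- (m1 + r + - m1) + (m2 + r + - m2) = m1 + (- r + (w + r + - w + - r) + r) + - m1"
    by (simp add: w_def add.assoc minus_add)
  then have "- (m1 + r + - m1) + (m2 + r + - m2) \<in> N \<longleftrightarrow> w + r + - w + - r \<in> N"
    using N by (simp add: normal_conj_iff normal_conj_iff')
  also have "\<dots> \<longleftrightarrow> w \<in> Nprime N M r" using wM by (simp add: Nprime_def)
  finally show ?thesis
    using N M by (simp add: lcoset_eq_iff Nprime_subgrp normal_subgrp_subgrp w_def)
qed

lemma conj_orbit_param:
  assumes N: "normal_subgrp N" and M: "subgrp M" and Q: "reps Q M (Nprime N M r)"
  shows "bij_betw (\<lambda>(q, k). q + r + - q + k) (Q \<times> N) (\<Union>(orb N M (r::'g::group_add)))"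
proof -
  have sN: "subgrp N" using N by (rule normal_subgrp_subgrp)
  have QM: "Q \<subseteq> M" using Q by (simp add: reps_def)
  have rep_unique: "\<exists>!q. q \<in> Q \<and> lcoset q (Nprime N M r) = lcoset m (Nprime N M r)"
    if "m \<in> M" for m using Q that by (simp add: reps_def)
  have inj: "inj_on (\<lambda>(q, k). q + r + - q + k) (Q \<times> N)"
  proof (rule inj_onI, clarify)
    fix q1 k1 q2 k2 assume q1: "q1 \<in> Q" and k1: "k1 \<in> N" and q2: "q2 \<in> Q" and k2: "k2 \<in> N"
      and eq: "q1 + r + - q1 + k1 = q2 + r + - q2 + k2"
    have "lcoset (q1 + r + - q1) N = lcoset (q2 + r + - q2) N"
      using lcoset_absorb[OF sN k1, of "q1 + r + - q1"] lcoset_absorb[OF sN k2, of "q2 + r + - q2"] eq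
      by simp
    then have "lcoset q1 (Nprime N M r) = lcoset q2 (Nprime N M r)"
      using conj_coset_eq_iff[OF N M] q1 q2 QM by blast
    then have "q1 = q2" using rep_unique[of q1] q1 q2 QM by blast
    with eq show "q1 = q2 \<and> k1 = k2" by simp
  qed
  have "(\<lambda>(q, k). q + r + - q + k) ` (Q \<times> N) = \<Union>(orb N M r)"
  proof (intro equalityI subsetI)
    fix y assume "y \<in> (\<lambda>(q, k). q + r + - q + k) ` (Q \<times> N)"
    then show "y \<in> \<Union>(orb N M r)" using QM unfolding mem_Union_orb by auto
  next
    fix y assume "y \<in> \<Union>(orb N M r)"
    then obtain m k where m: "m \<in> M" and k: "k \<in> N" and y: "y = m + r + - m + k"
      unfolding mem_Union_orb by blast
    obtain q where q: "q \<in> Q" and "lcoset q (Nprime N M r) = lcoset m (Nprime N M r)"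
      using rep_unique[OF m] by blast
    then have "lcoset (q + r + - q) N = lcoset (m + r + - m) N"
      using conj_coset_eq_iff[OF N M] m QM by blast
    also have "\<dots> = lcoset y N" using y lcoset_absorb[OF sN k] by simp
    finally have "- (q + r + - q) + y \<in> N" using sN by (simp add: lcoset_eq_iff)
    moreover have "y = q + r + - q + (- (q + r + - q) + y)" by (simp add: add.assoc)
    ultimately show "y \<in> (\<lambda>(q, k). q + r + - q + k) ` (Q \<times> N)" using q by force
  qed
  with inj show ?thesis by (simp add: bij_betw_def)
qed

(* For n central in M, the operator K^{{n},C} is the sum of F^{n,y} over all y in the
   union of C: centrality removes the conjugation of n, and the remaining double sum is
   reindexed by the parametrisation above. *)
lemma Kop_eq_sum_over_orbit:
  fixes N M :: "'g::{group_add,finite} set"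
  assumes N: "normal_subgrp N" and M: "subgrp M"
    and central: "\<forall>a\<in>N. \<forall>m\<in>M. a + m = m + a" and n: "n \<in> N"
    and C: "C \<in> conj_orbits N M" and rC: "lcoset (r C) N \<in> C"
    and QC: "reps (Q C) M (Nprime N M (r C))"
  shows "Kop \<sigma> N r Q {n} C = (\<Sum>y\<in>\<Union>C. ribbon_F \<sigma> n y)"
proof -
  have "r C \<in> \<Union>C" using rC lcoset_self[OF normal_subgrp_subgrp[OF N]] by blast
  then have C_eq: "C = orb N M (r C)" by (rule conj_orbit_eq_orb[OF N M C])
  have n_fixed: "q + n + - q = n" if "q \<in> Q C" for q
  proof -
    have "q \<in> M" using QC that by (auto simp: reps_def)
    then have "q + n = n + q" using central n by metis
    then show ?thesis by (simp add: add.assoc)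
  qed
  have "Kop \<sigma> N r Q {n} C = (\<Sum>q\<in>Q C. \<Sum>k\<in>N. ribbon_F \<sigma> n (q + r C + - q + k))"
    by (simp add: Kop_def n_fixed)
  also have "\<dots> = (\<Sum>(q, k)\<in>Q C \<times> N. ribbon_F \<sigma> n (q + r C + - q + k))"
    by (simp add: sum.cartesian_product)
  also have "\<dots> = (\<Sum>y\<in>\<Union>(orb N M (r C)). ribbon_F \<sigma> n y)"
    using sum.reindex_bij_betw[OF conj_orbit_param[OF N M QC], of "ribbon_F \<sigma> n"]
    by (simp add: case_prod_unfold)
  finally show ?thesis by (simp only: C_eq[symmetric])
qed

theorem mainTheorem10:
  fixes L :: "('v, 'e::finite, 'f) lattice"
    and \<sigma> :: "('v, 'f, 'e) tri list"
    and N M :: "'g::{group_add,finite} set"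
    and r :: "'g set set \<Rightarrow> 'g"
    and Q :: "'g set set \<Rightarrow> 'g set"
    and n :: 'g and t :: "'g set"
  assumes "lattice_ok L"
    and "normal_subgrp N" and "normal_subgrp M" and "N \<subseteq> M"
    and "\<forall>a\<in>N. \<forall>m\<in>M. a + m = m + a"
    and "is_ribbon L \<sigma>" and "proper_ribbon \<sigma>" and "closed_ribbon \<sigma>"
    and "n \<in> N" and "t \<in> quot M"
    and "\<forall>C\<in>conj_orbits N M. lcoset (r C) N \<in> C"
    and "\<forall>C\<in>conj_orbits N M. reps (Q C) M (Nprime N M (r C))"
  shows "Jop \<sigma> n t = (\<Sum>C\<in>{C \<in> conj_orbits N M. \<forall>X\<in>C. X \<subseteq> t}. Kop \<sigma> N r Q {n} C)"
proof -
  note N = assms(2) and M = assms(3)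
  have sM: "subgrp M" using M by (rule normal_subgrp_subgrp)
  define S where "S = {C \<in> conj_orbits N M. \<forall>X\<in>C. X \<subseteq> t}"
  have "Jop \<sigma> n t = sum (ribbon_F \<sigma> n) (\<Union>(Union ` S))"
    using coset_eq_Union_conj_orbits[OF N M assms(4,10)] by (simp add: Jop_def S_def)
  also have "\<dots> = (\<Sum>C\<in>S. sum (ribbon_F \<sigma> n) (\<Union>C))"
    using conj_orbits_disjoint[OF N sM] by (intro sum.UNION_disjoint) (auto simp: S_def)
  also have "\<dots> = (\<Sum>C\<in>S. Kop \<sigma> N r Q {n} C)"
  proof (rule sum.cong)
    fix C assume "C \<in> S"
    then have "C \<in> conj_orbits N M" by (simp add: S_def)
    with assms(11,12) show "sum (ribbon_F \<sigma> n) (\<Union>C) = Kop \<sigma> N r Q {n} C"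
      by (simp add: Kop_eq_sum_over_orbit[OF N sM assms(5,9)])
  qed simp
  finally show ?thesis by (simp only: S_def)
qed

end
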